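(* Let $\rho\ge 0$ and let $t=(\sqrt{1+8\rho}-1)/(2\rho)$ if $\rho>0$ and $t=2$ if $\rho=0$. In the two-dimensional Poisson regression model with interaction, the design $\xi_t$ which assigns equal weights $1/4$ to the four settings $\mathbf{x}_0=(0,0)$, $\mathbf{x}_1=(2,0)$, $\mathbf{x}_2=(0,2)$ and $\mathbf{x}_3=(t,t)$ is locally $D$-optimal at $\boldsymbol{\beta}=(0,-1,-1,-\rho)^\top$ on $\mathcal{X}=[0,\infty)^2$.
   Context: In the two-dimensional Poisson regression model with interaction, an observation $Y$ at setting $\mathbf{x}=(x_1,x_2)$ is Poisson distributed with mean $\lambda(\mathbf{x})=\exp(\mathbf{f}(\mathbf{x})^\top\boldsymbol{\beta})$, where $\mathbf{f}(\mathbf{x})=(1,x_1,x_2,x_1x_2)^\top$ and $\boldsymbol{\beta}=(\beta_0,\beta_1,\beta_2,\beta_{12})^\top$. An (approximate) design $\xi$ on $\mathcal{X}$ is a finite collection of mutually distinct settings $\mathbf{x}_0,\dots,\mathbf{x}_{n-1}\in\mathcal{X}$ with weights $w_i\ge 0$, $\sum_i w_i=1$; its information matrix is $\mathbf{M}_{\boldsymbol{\beta}}(\xi)=\sum_i w_i\lambda(\mathbf{x}_i)\mathbf{f}(\mathbf{x}_i)\mathbf{f}(\mathbf{x}_i)^\top$. A design is locally $D$-optimal at $\boldsymbol{\beta}$ on $\mathcal{X}$ if it maximizes $\det\mathbf{M}_{\boldsymbol{\beta}}(\xi)$ over all designs on $\mathcal{X}$. *)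

theory Defs
  imports "HOL-Analysis.Analysis"
begin

definition regf :: "real \<times> real \<Rightarrow> real ^ 4" where
  "regf x = vector [1, fst x, snd x, fst x * snd x]"

definition intensity :: "real ^ 4 \<Rightarrow> real \<times> real \<Rightarrow> real" where
  "intensity \<beta> x = exp (regf x \<bullet> \<beta>)"

definition is_design :: "(real \<times> real) set \<Rightarrow> (real \<times> real) set \<Rightarrow> (real \<times> real \<Rightarrow> real) \<Rightarrow> bool" where
  "is_design X S w \<longleftrightarrow> finite S \<and> S \<noteq> {} \<and> S \<subseteq> X \<and> (\<forall>x\<in>S. w x \<ge> 0) \<and> (\<Sum>x\<in>S. w x) = 1"

definition info_matrix :: "real ^ 4 \<Rightarrow> (real \<times> real) set \<Rightarrow> (real \<times> real \<Rightarrow> real) \<Rightarrow> real ^ 4 ^ 4" where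
  "info_matrix \<beta> S w = (\<Sum>x\<in>S. (w x * intensity \<beta> x) *\<^sub>R
      (\<chi> i j. regf x $ i * regf x $ j))"

definition locally_D_optimal :: "real ^ 4 \<Rightarrow> (real \<times> real) set \<Rightarrow> (real \<times> real) set \<Rightarrow> (real \<times> real \<Rightarrow> real) \<Rightarrow> bool" where
  "locally_D_optimal \<beta> X S w \<longleftrightarrow> is_design X S w \<and>
     (\<forall>S' w'. is_design X S' w' \<longrightarrow> det (info_matrix \<beta> S' w') \<le> det (info_matrix \<beta> S w))"

end

theory Submission
  imports Defs
begin

text \<open>Write \<open>f(x) = \<Sum>\<^sub>k \<ell>\<^sub>k(x) f(x\<^sub>k)\<close> with the Lagrange basis \<open>\<ell>\<^sub>0, \<dots>, \<ell>\<^sub>3\<close> of the four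
  support points. Then \<open>M(\<xi>) = F\<^sup>T N(\<xi>) F\<close> with \<open>F\<close> fixed and \<open>N(\<xi>)\<close> the Gram matrix of the
  \<open>\<ell>\<^sub>k\<close> with respect to the measure \<open>w \<lambda>\<close>. By Hadamard's inequality and AM-GM,
  \<open>det N(\<xi>) \<le> \<Prod>\<^sub>k \<lambda>(x\<^sub>k) y\<^sub>k \<le> \<Prod>\<^sub>k \<lambda>(x\<^sub>k) / 4\<^sup>4 = det N(\<xi>\<^sub>t)\<close> where \<open>y\<^sub>k = N\<^sub>k\<^sub>k / \<lambda>(x\<^sub>k)\<close>,
  provided \<open>\<Sum>\<^sub>k y\<^sub>k \<le> 1\<close>. This follows from the pointwise bound
  \<open>\<lambda>(x) \<Sum>\<^sub>k \<ell>\<^sub>k(x)\<^sup>2 / \<lambda>(x\<^sub>k) \<le> 1\<close> on the quadrant (the equivalence-theorem condition).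
  With \<open>x = (t a, t b)\<close>, the sum is a convex quadratic in \<open>(a + b, a b)\<close> while \<open>1 / \<lambda>(x)\<close> is
  constant on the lines \<open>t (a + b) + (2 - t) a b = y\<close>; every point of such a line in the quadrant
  lies between its points on the axis and on the diagonal, where the bound reduces to
  one-variable inequalities between polynomials and exponentials.\<close>

section \<open>Gram matrices and Hadamard's inequality\<close>

definition weighted_inner :: "'a set \<Rightarrow> ('a \<Rightarrow> real) \<Rightarrow> ('a \<Rightarrow> real) \<Rightarrow> ('a \<Rightarrow> real) \<Rightarrow> real" where
  "weighted_inner S c u v = (\<Sum>x\<in>S. c x * u x * v x)"

definition gram_matrix :: "'a set \<Rightarrow> ('a \<Rightarrow> real) \<Rightarrow> ('n \<Rightarrow> 'a \<Rightarrow> real) \<Rightarrow> real^'n^'n" where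
  "gram_matrix S c g = (\<chi> i j. weighted_inner S c (g i) (g j))"

definition proj_coeff :: "'a set \<Rightarrow> ('a \<Rightarrow> real) \<Rightarrow> ('a \<Rightarrow> real) \<Rightarrow> ('a \<Rightarrow> real) \<Rightarrow> real" where
  "proj_coeff S c u v = weighted_inner S c u v / weighted_inner S c v v"

definition gram_schmidt ::
    "'a set \<Rightarrow> ('a \<Rightarrow> real) \<Rightarrow> ('n::{finite,wellorder} \<Rightarrow> 'a \<Rightarrow> real) \<Rightarrow> 'n \<Rightarrow> 'a \<Rightarrow> real" where
  "gram_schmidt S c g = wfrec {(m, i). m < i}
     (\<lambda>q i x. g i x - (\<Sum>m\<in>{..<i}. proj_coeff S c (g i) (q m) * q m x))"

lemma weighted_inner_commute: "weighted_inner S c u v = weighted_inner S c v u"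
  unfolding weighted_inner_def by (simp add: mult_ac)

lemma weighted_inner_self_nonneg:
  "(\<And>x. x \<in> S \<Longrightarrow> c x \<ge> 0) \<Longrightarrow> weighted_inner S c u u \<ge> 0"
  unfolding weighted_inner_def by (intro sum_nonneg) (simp add: mult.assoc)

lemma weighted_inner_diff_sum_left:
  "weighted_inner S c (\<lambda>x. h x - (\<Sum>m\<in>J. a m * q m x)) v
     = weighted_inner S c h v - (\<Sum>m\<in>J. a m * weighted_inner S c (q m) v)"
proof -
  have "(\<Sum>x\<in>S. \<Sum>m\<in>J. a m * (c x * q m x * v x)) = (\<Sum>m\<in>J. a m * weighted_inner S c (q m) v)"
    unfolding weighted_inner_def by (subst sum.swap) (simp add: sum_distrib_left)
  then show ?thesis
    unfolding weighted_inner_def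
    by (simp add: algebra_simps sum_subtractf sum_distrib_left sum_distrib_right)
qed

lemma weighted_inner_eq_0_if_null:
  assumes "finite S" "\<And>x. x \<in> S \<Longrightarrow> c x \<ge> 0" "weighted_inner S c u u = 0"
  shows "weighted_inner S c u v = 0"
proof -
  have "\<forall>x\<in>S. c x * u x * u x = 0"
    using assms unfolding weighted_inner_def
    by (subst sum_nonneg_eq_0_iff[symmetric]) (auto simp: mult.assoc)
  then show ?thesis
    unfolding weighted_inner_def by (intro sum.neutral) auto
qed

text \<open>For a null \<open>v\<close> the coefficient divides by zero and is \<open>0\<close>; the identity survives
  because a null function is orthogonal to everything when the weights are nonnegative.\<close>
lemma weighted_inner_proj_coeff:
  assumes "finite S" "\<And>x. x \<in> S \<Longrightarrow> c x \<ge> 0"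
  shows "weighted_inner S c u v = proj_coeff S c u v * weighted_inner S c v v"
proof (cases "weighted_inner S c v v = 0")
  case True
  then show ?thesis
    using weighted_inner_eq_0_if_null[OF assms True] by (simp add: weighted_inner_commute)
qed (simp add: proj_coeff_def)

lemma weighted_inner_residual_orthogonal:
  assumes S: "finite S" "\<And>x. x \<in> S \<Longrightarrow> c x \<ge> 0"
    and J: "finite J" "k \<in> J"
    and orth: "\<And>m m'. m \<in> J \<Longrightarrow> m' \<in> J \<Longrightarrow> m \<noteq> m' \<Longrightarrow> weighted_inner S c (q m) (q m') = 0"
  shows "weighted_inner S c (\<lambda>x. h x - (\<Sum>m\<in>J. proj_coeff S c h (q m) * q m x)) (q k) = 0"
proof -
  have "(\<Sum>m\<in>J. proj_coeff S c h (q m) * weighted_inner S c (q m) (q k))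
        = proj_coeff S c h (q k) * weighted_inner S c (q k) (q k)"
    using J orth by (subst sum.remove[of J k]) (auto intro!: sum.neutral)
  then show ?thesis
    unfolding weighted_inner_diff_sum_left
    using weighted_inner_proj_coeff[OF S, where u = h and v = "q k"] by simp
qed

lemma gram_schmidt_eq:
  "gram_schmidt S c g i = (\<lambda>x. g i x -
     (\<Sum>m\<in>{..<i}. proj_coeff S c (g i) (gram_schmidt S c g m) * gram_schmidt S c g m x))"
  by (subst def_wfrec[OF gram_schmidt_def[THEN eq_reflection] wf])
    (auto intro!: sum.cong simp: cut_apply)

lemma gram_schmidt_orthogonal:
  fixes g :: "'n::{finite,wellorder} \<Rightarrow> 'a \<Rightarrow> real"
  assumes S: "finite S" "\<And>x. x \<in> S \<Longrightarrow> c x \<ge> 0" and "m \<noteq> i"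
  shows "weighted_inner S c (gram_schmidt S c g i) (gram_schmidt S c g m) = 0"
proof -
  let ?q = "gram_schmidt S c g"
  have below: "\<forall>m<i. weighted_inner S c (?q i) (?q m) = 0" for i
  proof (induction i rule: less_induct)
    case (less i)
    have orth: "weighted_inner S c (?q m) (?q m') = 0" if "m < i" "m' < i" "m \<noteq> m'" for m m'
    proof (cases "m' < m")
      case False
      then have "m < m'" using \<open>m \<noteq> m'\<close> by simp
      then show ?thesis
        by (subst weighted_inner_commute) (use less.IH[OF \<open>m' < i\<close>] in simp)
    qed (use less.IH[OF \<open>m < i\<close>] in simp)
    show ?case
      by (subst gram_schmidt_eq) (auto intro!: weighted_inner_residual_orthogonal[OF S] orth)
  qed
  show ?thesis
  proof (cases "m < i")
    case False
    then have "i < m" using \<open>m \<noteq> i\<close> by simp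
    then show ?thesis by (subst weighted_inner_commute) (use below[of m] in simp)
  qed (use below[of i] in simp)
qed

lemma gram_schmidt_triangular:
  fixes S :: "'a set" and c :: "'a \<Rightarrow> real" and g :: "'n::{finite,wellorder} \<Rightarrow> 'a \<Rightarrow> real"
  defines "L \<equiv> \<lambda>i k. if k = i then 1 else if k < i
             then proj_coeff S c (g i) (gram_schmidt S c g k) else 0"
  shows "g i x = (\<Sum>k\<in>UNIV. L i k * gram_schmidt S c g k x)"
proof -
  let ?q = "gram_schmidt S c g"
  have "L i i = 1" by (simp add: L_def)
  have "(\<Sum>k\<in>UNIV. L i k * ?q k x) = ?q i x + (\<Sum>k\<in>UNIV - {i}. L i k * ?q k x)"
    using sum.remove[of UNIV i "\<lambda>k. L i k * ?q k x"] by (simp add: \<open>L i i = 1\<close>)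
  also have "(\<Sum>k\<in>UNIV - {i}. L i k * ?q k x)
      = (\<Sum>k\<in>{..<i}. proj_coeff S c (g i) (?q k) * ?q k x)"
    by (rule sum.mono_neutral_cong_right) (auto simp: L_def)
  finally have "(\<Sum>k\<in>UNIV. L i k * ?q k x)
      = ?q i x + (\<Sum>k\<in>{..<i}. proj_coeff S c (g i) (?q k) * ?q k x)" .
  moreover have "?q i x = g i x - (\<Sum>k\<in>{..<i}. proj_coeff S c (g i) (?q k) * ?q k x)"
    by (subst gram_schmidt_eq) (rule refl)
  ultimately show ?thesis by linarith
qed

lemma weighted_inner_sum_sum:
  "weighted_inner S c (\<lambda>x. \<Sum>k\<in>K. a k * u k x) (\<lambda>x. \<Sum>m\<in>M. b m * v m x)
     = (\<Sum>k\<in>K. \<Sum>m\<in>M. a k * b m * weighted_inner S c (u k) (v m))"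
proof -
  have "weighted_inner S c (\<lambda>x. \<Sum>k\<in>K. a k * u k x) (\<lambda>x. \<Sum>m\<in>M. b m * v m x)
      = (\<Sum>x\<in>S. \<Sum>k\<in>K. \<Sum>m\<in>M. a k * b m * (c x * u k x * v m x))"
    unfolding weighted_inner_def by (simp add: sum_distrib_left sum_distrib_right mult_ac)
  also have "\<dots> = (\<Sum>k\<in>K. \<Sum>m\<in>M. \<Sum>x\<in>S. a k * b m * (c x * u k x * v m x))"
    by (subst sum.swap) (simp add: sum.swap[of _ S])
  finally show ?thesis
    unfolding weighted_inner_def by (simp add: sum_distrib_left)
qed

text \<open>Hadamard's inequality for Gram matrices: Gram--Schmidt writes the matrix as
  \<open>L D L\<^sup>T\<close> with \<open>L\<close> unitriangular and \<open>D\<close> diagonal, and each diagonal entry of \<open>D\<close>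
  is bounded by the corresponding diagonal entry of the Gram matrix.\<close>
lemma det_gram_matrix_le_prod_diagonal:
  fixes g :: "'n::{finite,wellorder} \<Rightarrow> 'a \<Rightarrow> real"
  assumes S: "finite S" "\<And>x. x \<in> S \<Longrightarrow> c x \<ge> 0"
  shows "det (gram_matrix S c g) \<le> (\<Prod>i\<in>UNIV. weighted_inner S c (g i) (g i))"
proof -
  define q where "q = gram_schmidt S c g"
  define L where "L i k = (if k = i then 1 else if k < i then proj_coeff S c (g i) (q k) else 0)"
    for i k :: 'n
  define d where "d k = weighted_inner S c (q k) (q k)" for k
  have d_nonneg: "d k \<ge> 0" for k
    unfolding d_def using weighted_inner_self_nonneg S(2) by blast
  have g_eq: "g i = (\<lambda>x. \<Sum>k\<in>UNIV. L i k * q k x)" for i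
    using gram_schmidt_triangular[of g i] unfolding q_def L_def by auto
  have entry: "weighted_inner S c (g i) (g j) = (\<Sum>k\<in>UNIV. L i k * L j k * d k)" for i j
  proof -
    have "weighted_inner S c (g i) (g j)
        = (\<Sum>k\<in>UNIV. \<Sum>m\<in>UNIV. L i k * L j m * weighted_inner S c (q k) (q m))"
      by (subst (1 2) g_eq) (rule weighted_inner_sum_sum)
    also have "\<dots> = (\<Sum>k\<in>UNIV. \<Sum>m\<in>UNIV. if m = k then L i k * L j k * d k else 0)"
      using gram_schmidt_orthogonal[of S c, OF S] unfolding q_def d_def by (intro sum.cong refl) auto
    finally show ?thesis by simp
  qed
  define Lm where "Lm = (\<chi> i k. L i k)"
  define Dm where "Dm = (\<chi> k m. if k = m then d k else 0)"
  have "gram_matrix S c g = Lm ** Dm ** transpose Lm"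
    by (simp add: vec_eq_iff gram_matrix_def entry matrix_matrix_mult_def Lm_def Dm_def
        transpose_def if_distrib[of "\<lambda>z. L _ _ * z"] mult_ac cong: if_cong)
  moreover have "det Lm = 1"
    by (subst det_lowerdiagonal) (auto simp: Lm_def L_def)
  moreover have "det Dm = (\<Prod>k\<in>UNIV. d k)"
    by (subst det_diagonal) (auto simp: Dm_def)
  ultimately have "det (gram_matrix S c g) = (\<Prod>k\<in>UNIV. d k)"
    by (simp add: det_mul det_transpose)
  also have "\<dots> \<le> (\<Prod>i\<in>UNIV. weighted_inner S c (g i) (g i))"
  proof (rule prod_mono)
    fix i
    have "L i i * L i i * d i \<le> (\<Sum>k\<in>UNIV. L i k * L i k * d k)"
      by (rule member_le_sum) (auto intro: mult_nonneg_nonneg[OF zero_le_square d_nonneg])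
    then show "0 \<le> d i \<and> d i \<le> weighted_inner S c (g i) (g i)"
      using d_nonneg[of i] by (simp add: entry L_def)
  qed
  finally show ?thesis .
qed

section \<open>Uniform designs on a Lagrange basis\<close>

lemma prod_le_mean_power:
  fixes y :: "'a \<Rightarrow> real"
  assumes "finite S" "S \<noteq> {}" "\<And>i. i \<in> S \<Longrightarrow> y i \<ge> 0"
  shows "(\<Prod>i\<in>S. y i) \<le> ((\<Sum>i\<in>S. y i) / card S) ^ card S"
proof -
  have n: "card S > 0" using assms by (simp add: card_gt_0_iff)
  have P: "(\<Prod>i\<in>S. y i) \<ge> 0" using assms by (simp add: prod_nonneg)
  have "(\<Prod>i\<in>S. y i) = ((\<Prod>i\<in>S. y i) powr (1 / card S)) ^ card S"
    using P n by (simp add: powr_realpow'[symmetric] powr_powr)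
  also have "\<dots> \<le> ((\<Sum>i\<in>S. y i) / card S) ^ card S"
    using arith_geom_mean[OF assms] by (intro power_mono) (simp_all add: sum_divide_distrib)
  finally show ?thesis .
qed

lemma moment_matrix_eq_gram_matrix:
  fixes f :: "'a \<Rightarrow> real^'n" and xs :: "'n \<Rightarrow> 'a" and l :: "'n \<Rightarrow> 'a \<Rightarrow> real"
  assumes basis: "\<And>x. x \<in> S \<Longrightarrow> f x = (\<Sum>k\<in>UNIV. l k x *\<^sub>R f (xs k))"
  shows "(\<Sum>x\<in>S. c x *\<^sub>R (\<chi> i j. f x $ i * f x $ j))
           = transpose (\<chi> k. f (xs k)) ** gram_matrix S c l ** (\<chi> k. f (xs k))"
proof -
  have "(\<Sum>x\<in>S. c x *\<^sub>R (\<chi> i j. f x $ i * f x $ j)) $ i $ j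
      = weighted_inner S c (\<lambda>x. \<Sum>k\<in>UNIV. f (xs k) $ i * l k x)
                           (\<lambda>x. \<Sum>k\<in>UNIV. f (xs k) $ j * l k x)" for i j
    unfolding weighted_inner_def using basis by (auto intro!: sum.cong simp: mult_ac)
  also have "\<dots> i j = (\<Sum>a\<in>UNIV. \<Sum>b\<in>UNIV. f (xs a) $ i * f (xs b) $ j * weighted_inner S c (l a) (l b))"
    for i j by (rule weighted_inner_sum_sum)
  also have "\<dots> i j = (transpose (\<chi> k. f (xs k)) ** gram_matrix S c l ** (\<chi> k. f (xs k))) $ i $ j"
    for i j
  proof -
    have "(\<Sum>a\<in>UNIV. \<Sum>b\<in>UNIV. f (xs a) $ i * f (xs b) $ j * weighted_inner S c (l a) (l b))
        = (\<Sum>b\<in>UNIV. \<Sum>a\<in>UNIV. f (xs a) $ i * weighted_inner S c (l a) (l b) * f (xs b) $ j)"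
      by (subst sum.swap) (simp add: mult_ac)
    then show ?thesis
      by (simp add: gram_matrix_def matrix_matrix_mult_def transpose_def sum_distrib_right)
  qed
  finally show ?thesis by (simp add: vec_eq_iff)
qed

lemma det_moment_matrix:
  fixes f :: "'a \<Rightarrow> real^'n" and xs :: "'n \<Rightarrow> 'a" and l :: "'n \<Rightarrow> 'a \<Rightarrow> real"
  assumes "\<And>x. x \<in> S \<Longrightarrow> f x = (\<Sum>k\<in>UNIV. l k x *\<^sub>R f (xs k))"
  shows "det (\<Sum>x\<in>S. c x *\<^sub>R (\<chi> i j. f x $ i * f x $ j))
           = det (\<chi> k. f (xs k)) ^ 2 * det (gram_matrix S c l)"
proof -
  have "(\<Sum>x\<in>S. c x *\<^sub>R (\<chi> i j. f x $ i * f x $ j))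
      = transpose (\<chi> k. f (xs k)) ** gram_matrix S c l ** (\<chi> k. f (xs k))"
    by (rule moment_matrix_eq_gram_matrix) (rule assms)
  then show ?thesis by (simp add: det_mul power2_eq_square)
qed

text \<open>Hypothesis \<open>sensitivity\<close> is the Kiefer--Wolfowitz condition that the sensitivity function
  of the uniform design on \<open>xs\<close> is at most \<open>n\<close>, written in the Lagrange basis \<open>l\<close> of \<open>xs\<close>.\<close>
lemma uniform_saturated_design_D_optimal:
  fixes f :: "'a \<Rightarrow> real^'n::{finite,wellorder}" and xs :: "'n \<Rightarrow> 'a"
    and l :: "'n \<Rightarrow> 'a \<Rightarrow> real" and lam :: "'a \<Rightarrow> real"
  assumes basis: "\<And>x. f x = (\<Sum>k\<in>UNIV. l k x *\<^sub>R f (xs k))"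
    and l_xs: "\<And>k m. l k (xs m) = (if k = m then 1 else 0)"
    and lam_xs: "\<And>k. lam (xs k) > 0"
    and S: "finite S" "\<And>x. x \<in> S \<Longrightarrow> w x \<ge> 0" "(\<Sum>x\<in>S. w x) = 1" "\<And>x. x \<in> S \<Longrightarrow> lam x \<ge> 0"
    and sensitivity: "\<And>x. x \<in> S \<Longrightarrow> lam x * (\<Sum>k\<in>UNIV. (l k x)\<^sup>2 / lam (xs k)) \<le> 1"
  shows "det (\<Sum>x\<in>S. (w x * lam x) *\<^sub>R (\<chi> i j. f x $ i * f x $ j))
       \<le> det (\<Sum>x\<in>range xs. (1 / CARD('n) * lam x) *\<^sub>R (\<chi> i j. f x $ i * f x $ j))"
proof -
  let ?n = "CARD('n)"
  let ?c = "\<lambda>x. w x * lam x"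
  define y where "y k = weighted_inner S ?c (l k) (l k) / lam (xs k)" for k
  have y_nonneg: "y k \<ge> 0" for k
    unfolding y_def using S(2,4) lam_xs[of k]
    by (intro divide_nonneg_pos weighted_inner_self_nonneg) auto
  have "(\<Sum>k\<in>UNIV. y k) = (\<Sum>x\<in>S. w x * (lam x * (\<Sum>k\<in>UNIV. (l k x)\<^sup>2 / lam (xs k))))"
    unfolding y_def weighted_inner_def sum_divide_distrib sum_distrib_left
    by (subst sum.swap) (simp add: power2_eq_square mult_ac)
  also have "\<dots> \<le> (\<Sum>x\<in>S. w x)"
    using S(2) sensitivity by (intro sum_mono) (simp add: mult_left_le)
  finally have sum_y: "(\<Sum>k\<in>UNIV. y k) \<le> 1" using S(3) by simp
  have "det (gram_matrix S ?c l) \<le> (\<Prod>k\<in>UNIV. weighted_inner S ?c (l k) (l k))"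
    using S(2,4) by (intro det_gram_matrix_le_prod_diagonal[OF S(1)]) simp
  also have "\<dots> = (\<Prod>k\<in>UNIV. lam (xs k)) * (\<Prod>k\<in>UNIV. y k)"
    unfolding y_def using lam_xs by (simp add: prod.distrib[symmetric] less_imp_neq[symmetric])
  also have "\<dots> \<le> (\<Prod>k\<in>UNIV. lam (xs k)) * (1 / ?n) ^ ?n"
  proof (intro mult_left_mono)
    have "(\<Prod>k\<in>UNIV. y k) \<le> ((\<Sum>k\<in>UNIV. y k) / ?n) ^ ?n"
      using y_nonneg by (intro prod_le_mean_power) auto
    also have "\<dots> \<le> (1 / ?n) ^ ?n"
      using sum_y y_nonneg by (intro power_mono divide_right_mono divide_nonneg_nonneg sum_nonneg) auto
    finally show "(\<Prod>k\<in>UNIV. y k) \<le> (1 / ?n) ^ ?n" .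
  qed (use lam_xs in \<open>auto intro: prod_nonneg less_imp_le\<close>)
  also have "\<dots> = det (gram_matrix (range xs) (\<lambda>x. 1 / ?n * lam x) l)"
  proof -
    have "inj xs" using l_xs by (metis injI zero_neq_one)
    have "weighted_inner (range xs) (\<lambda>x. 1 / ?n * lam x) (l i) (l j)
        = (if i = j then 1 / ?n * lam (xs i) else 0)" for i j
    proof -
      have "weighted_inner (range xs) (\<lambda>x. 1 / ?n * lam x) (l i) (l j)
          = (\<Sum>k\<in>UNIV. 1 / ?n * lam (xs k) * l i (xs k) * l j (xs k))"
        unfolding weighted_inner_def using \<open>inj xs\<close> by (simp add: sum.reindex)
      also have "\<dots> = (\<Sum>k\<in>UNIV. if k = i then (if i = j then 1 / ?n * lam (xs i) else 0) else 0)"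
        by (intro sum.cong) (auto simp: l_xs)
      finally show ?thesis by simp
    qed
    then have "gram_matrix (range xs) (\<lambda>x. 1 / ?n * lam x) l
        = (\<chi> i j. if i = j then 1 / ?n * lam (xs i) else 0)"
      by (simp add: vec_eq_iff gram_matrix_def)
    then show ?thesis by (simp add: det_diagonal prod_dividef power_divide)
  qed
  finally have "det (gram_matrix S ?c l) \<le> det (gram_matrix (range xs) (\<lambda>x. 1 / ?n * lam x) l)" .
  then show ?thesis
    unfolding det_moment_matrix[where S = S, OF basis] det_moment_matrix[where S = "range xs", OF basis]
    by (intro mult_left_mono) auto
qed

section \<open>Exponential inequalities on the axis and the diagonal\<close>

lemma DERIV_le_max_endpoints:
  fixes f f' :: "real \<Rightarrow> real"
  assumes "a \<le> x" "x \<le> b"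
    and der: "\<And>y. a \<le> y \<Longrightarrow> y \<le> b \<Longrightarrow> DERIV f y :> f' y"
    and sign: "(\<forall>y. a \<le> y \<and> y \<le> x \<longrightarrow> f' y \<le> 0) \<or> (\<forall>y. x \<le> y \<and> y \<le> b \<longrightarrow> f' y \<ge> 0)"
  shows "f x \<le> max (f a) (f b)"
  using sign
proof
  assume nonpos: "\<forall>y. a \<le> y \<and> y \<le> x \<longrightarrow> f' y \<le> 0"
  have "f x \<le> f a"
  proof (rule DERIV_nonpos_imp_nonincreasing[OF \<open>a \<le> x\<close>])
    fix y assume "a \<le> y" "y \<le> x"
    then show "\<exists>d. DERIV f y :> d \<and> d \<le> 0"
      using der[of y] nonpos \<open>x \<le> b\<close> by auto
  qed
  then show ?thesis by simp
next
  assume nonneg: "\<forall>y. x \<le> y \<and> y \<le> b \<longrightarrow> f' y \<ge> 0"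
  have "f x \<le> f b"
  proof (rule DERIV_nonneg_imp_nondecreasing[OF \<open>x \<le> b\<close>])
    fix y assume "x \<le> y" "y \<le> b"
    then show "\<exists>d. DERIV f y :> d \<and> d \<ge> 0"
      using der[of y] nonneg \<open>a \<le> x\<close> by auto
  qed
  then show ?thesis by simp
qed

lemma four_le_exp_2: "4 \<le> exp (2::real)"
proof -
  have "2 \<le> exp (1::real)" using exp_ge_add_one_self[of 1] by simp
  then have "2 * 2 \<le> exp (1::real) * exp 1" by (intro mult_mono) auto
  also have "\<dots> = exp 2" by (simp flip: exp_add)
  finally show ?thesis by simp
qed

text \<open>The factor \<open>exp (- s)\<close> turns the claim into \<open>\<Psi> \<le> 1\<close> for a function \<open>\<Psi>\<close> with \<open>\<Psi> 0 = \<Psi> 2 = 1\<close>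
  that decreases, increases and decreases again, changing direction at \<open>4 / (1 + e\<^sup>2)\<close> and \<open>2\<close>.\<close>
lemma axis_sensitivity_le_exp:
  fixes s :: real
  assumes "s \<ge> 0"
  shows "(1 - s/2)\<^sup>2 + exp 2 * s\<^sup>2 / 4 \<le> exp s"
proof -
  define E where "E = exp (2::real)"
  have E: "E \<ge> 4" using four_le_exp_2 by (simp add: E_def)
  define r where "r = 4 / (1 + E)"
  have r: "0 \<le> r" "r \<le> 2" using E by (auto simp: r_def field_simps)
  define \<Psi> where "\<Psi> s = ((1 - s/2)\<^sup>2 + E * s\<^sup>2 / 4) * exp (-s)" for s :: real
  define \<Psi>' where "\<Psi>' s = - (1 + E) / 4 * ((s - r) * (s - 2)) * exp (-s)" for s :: real
  have der: "DERIV \<Psi> y :> \<Psi>' y" for y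
  proof -
    have "DERIV \<Psi> y :> (E * y / 2 - (1 - y/2)) * exp (-y) - ((1 - y/2)\<^sup>2 + E * y\<^sup>2 / 4) * exp (-y)"
      unfolding \<Psi>_def by (auto intro!: derivative_eq_intros simp: power2_eq_square field_simps)
    also have "(E * y / 2 - (1 - y/2)) * exp (-y) - ((1 - y/2)\<^sup>2 + E * y\<^sup>2 / 4) * exp (-y) = \<Psi>' y"
      unfolding \<Psi>'_def r_def using E by (simp add: field_simps power2_eq_square)
    finally show ?thesis .
  qed
  have sign: "\<Psi>' y \<le> 0 \<longleftrightarrow> (y - r) * (y - 2) \<ge> 0" "\<Psi>' y \<ge> 0 \<longleftrightarrow> (y - r) * (y - 2) \<le> 0" for y
    unfolding \<Psi>'_def using E by (simp_all add: mult_le_0_iff zero_le_mult_iff)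
  have \<Psi>_ends: "\<Psi> 0 = 1" "\<Psi> 2 = 1"
    by (simp_all add: \<Psi>_def E_def exp_minus)
  have "\<Psi> s \<le> 1"
  proof (cases "s \<le> 2")
    case True
    have "\<Psi> s \<le> max (\<Psi> 0) (\<Psi> 2)"
    proof (rule DERIV_le_max_endpoints[OF \<open>s \<ge> 0\<close> True der])
      show "(\<forall>y. 0 \<le> y \<and> y \<le> s \<longrightarrow> \<Psi>' y \<le> 0) \<or> (\<forall>y. s \<le> y \<and> y \<le> 2 \<longrightarrow> \<Psi>' y \<ge> 0)"
      proof (cases "s \<le> r")
        case True
        then show ?thesis using sign by (auto intro!: mult_nonpos_nonpos)
      next
        case False
        have "\<Psi>' y \<ge> 0" if "s \<le> y" "y \<le> 2" for y
          using sign(2)[of y] that False mult_nonneg_nonpos[of "y - r" "y - 2"] by linarith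
        then show ?thesis by blast
      qed
    qed
    then show ?thesis by (simp add: \<Psi>_ends)
  next
    case False
    have "\<Psi> s \<le> \<Psi> 2"
    proof (rule DERIV_nonpos_imp_nonincreasing[of 2 s \<Psi>])
      fix y assume "2 \<le> y" "y \<le> s"
      then have "\<Psi>' y \<le> 0" using sign r by (auto intro!: mult_nonneg_nonneg)
      then show "\<exists>d. DERIV \<Psi> y :> d \<and> d \<le> 0" using der by blast
    qed (use False in simp)
    then show ?thesis by (simp add: \<Psi>_ends)
  qed
  moreover have "(1 - s/2)\<^sup>2 + exp 2 * s\<^sup>2 / 4 = \<Psi> s * exp s"
    by (simp add: \<Psi>_def E_def mult.assoc flip: exp_add)
  moreover have "\<Psi> s \<ge> 0"
    using E by (simp add: \<Psi>_def)
  ultimately show ?thesis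
    by (simp add: mult_left_le_one_le)
qed

text \<open>Replacing \<open>exp \<tau>\<close> by \<open>1 + \<tau>\<close> leaves a function affine in \<open>\<tau>\<close>, nonnegative at both ends.\<close>
lemma diagonal_growth_factor_nonneg:
  fixes x \<tau> :: real
  assumes "x \<ge> 0" "0 \<le> \<tau>" "\<tau> \<le> 2"
  shows "0 \<le> (2 + exp 2) * (1 - x * (2 - x) * \<tau>) + 2 * (2 - x) * (1 + x) + exp 2 * x\<^sup>2 * exp \<tau>"
proof -
  define E where "E = exp (2::real)"
  have E: "E \<ge> 4" using four_le_exp_2 by (simp add: E_def)
  define W where "W \<tau> = (2 + E) * (1 - x * (2 - x) * \<tau>) + 2 * (2 - x) * (1 + x) + E * x\<^sup>2 * (1 + \<tau>)"
    for \<tau>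
  have "W 0 = 6 + E + 2 * x + (E - 2) * x\<^sup>2"
    unfolding W_def by (simp add: algebra_simps power2_eq_square)
  moreover have "(E - 2) * x\<^sup>2 \<ge> 0"
    using E by simp
  ultimately have W0: "W 0 \<ge> 0"
    using E \<open>x \<ge> 0\<close> by linarith
  have "4 * (2 + 5 * E) * W 2 = (2 * (2 + 5 * E) * x - (6 + 4 * E))\<^sup>2 + (12 + 80 * E + 4 * E\<^sup>2)"
    unfolding W_def by (simp add: algebra_simps power2_eq_square)
  also have "\<dots> > 0"
    using E by (intro add_nonneg_pos) auto
  finally have W2: "W 2 \<ge> 0"
    using E by (simp add: zero_less_mult_iff)
  have "W \<tau> = (1 - \<tau> / 2) * W 0 + \<tau> / 2 * W 2"
    unfolding W_def by (simp add: algebra_simps)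
  then have "W \<tau> \<ge> 0"
    using W0 W2 assms(2,3) by simp
  moreover have "E * x\<^sup>2 * (1 + \<tau>) \<le> E * x\<^sup>2 * exp \<tau>"
    using E by (intro mult_left_mono) (auto simp: add.commute)
  ultimately show ?thesis
    unfolding W_def E_def by linarith
qed

text \<open>With \<open>k = x (2 - x)\<close> the claim reads \<open>\<Phi> t \<le> exp (2 x\<^sup>2)\<close>, where \<open>\<Phi> \<tau>\<close> is the
  left-hand side at \<open>t = \<tau>\<close> times \<open>exp (- k \<tau>)\<close>. Its derivative is \<open>exp (- k \<tau>)\<close> times an
  increasing function, so \<open>\<Phi>\<close> has no interior maximum on \<open>[0, 2]\<close>, and at \<open>\<tau> = 0\<close> and
  \<open>\<tau> = 2\<close> the axis bound applies.\<close>
lemma diagonal_sensitivity_le_exp: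
  fixes x t :: real
  assumes x: "x \<ge> 0" and t: "0 \<le> t" "t \<le> 2"
  shows "(1 - x)\<^sup>2 * ((1 - (t - 1) * x)\<^sup>2 + exp 2 * t\<^sup>2 * x\<^sup>2 / 2) + exp (t + 2) * x ^ 4
           \<le> exp (2 * t * x + (2 - t) * x\<^sup>2)"
proof -
  define E where "E = exp (2::real)"
  define k where "k = x * (2 - x)"
  define a where "a \<tau> = (1 - x)\<^sup>2 * ((1 + x - \<tau> * x)\<^sup>2 + E * x\<^sup>2 * \<tau>\<^sup>2 / 2)" for \<tau>
  define a' where "a' \<tau> = (1 - x)\<^sup>2 * (E * x\<^sup>2 * \<tau> - 2 * x * (1 + x - \<tau> * x))" for \<tau>
  define \<Phi> where "\<Phi> \<tau> = (a \<tau> + E * x ^ 4 * exp \<tau>) * exp (- k * \<tau>)" for \<tau>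
  define G where "G \<tau> = a' \<tau> - k * a \<tau> + (1 - k) * E * x ^ 4 * exp \<tau>" for \<tau>
  have da: "DERIV a \<tau> :> a' \<tau>" for \<tau>
    unfolding a_def a'_def
    by (auto intro!: derivative_eq_intros simp: field_simps power2_eq_square)
  have da': "DERIV a' \<tau> :> (1 - x)\<^sup>2 * (E * x\<^sup>2 + 2 * x\<^sup>2)" for \<tau>
    unfolding a'_def by (auto intro!: derivative_eq_intros simp: algebra_simps power2_eq_square)
  have d\<Phi>: "DERIV \<Phi> \<tau> :> G \<tau> * exp (- k * \<tau>)" for \<tau>
  proof -
    have "DERIV \<Phi> \<tau> :> (a' \<tau> + E * x ^ 4 * exp \<tau>) * exp (- k * \<tau>)
        + (a \<tau> + E * x ^ 4 * exp \<tau>) * (exp (- k * \<tau>) * (- k))"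
      unfolding \<Phi>_def by (auto intro!: derivative_eq_intros da)
    then show ?thesis by (simp add: G_def algebra_simps)
  qed
  have dG: "DERIV G \<tau> :> (1 - x)\<^sup>2 * x\<^sup>2 *
      ((2 + E) * (1 - k * \<tau>) + 2 * (2 - x) * (1 + x) + E * x\<^sup>2 * exp \<tau>)" for \<tau>
  proof -
    have "DERIV G \<tau> :> (1 - x)\<^sup>2 * (E * x\<^sup>2 + 2 * x\<^sup>2) - k * a' \<tau> + (1 - k) * E * x ^ 4 * exp \<tau>"
      unfolding G_def by (auto intro!: derivative_eq_intros da da')
    then show ?thesis
      unfolding a'_def k_def by (simp add: algebra_simps power2_eq_square power4_eq_xxxx)
  qed
  have G_mono: "G y \<le> G z" if "0 \<le> y" "y \<le> z" "z \<le> 2" for y z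
  proof (rule DERIV_nonneg_imp_nondecreasing[OF \<open>y \<le> z\<close>])
    fix \<tau> assume "y \<le> \<tau>" "\<tau> \<le> z"
    then have "0 \<le> (2 + E) * (1 - k * \<tau>) + 2 * (2 - x) * (1 + x) + E * x\<^sup>2 * exp \<tau>"
      using diagonal_growth_factor_nonneg[OF x, of \<tau>] that unfolding k_def E_def by simp
    then have "0 \<le> (1 - x)\<^sup>2 * x\<^sup>2 *
        ((2 + E) * (1 - k * \<tau>) + 2 * (2 - x) * (1 + x) + E * x\<^sup>2 * exp \<tau>)"
      by simp
    then show "\<exists>d. DERIV G \<tau> :> d \<and> d \<ge> 0"
      using dG by blast
  qed
  have "\<Phi> t \<le> max (\<Phi> 0) (\<Phi> 2)"
  proof (rule DERIV_le_max_endpoints[OF t d\<Phi>])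
    consider "G t \<le> 0" | "G t \<ge> 0" by linarith
    then show "(\<forall>y. 0 \<le> y \<and> y \<le> t \<longrightarrow> G y * exp (- k * y) \<le> 0)
        \<or> (\<forall>y. t \<le> y \<and> y \<le> 2 \<longrightarrow> G y * exp (- k * y) \<ge> 0)"
    proof cases
      case 1
      have "G y \<le> 0" if "0 \<le> y" "y \<le> t" for y
      proof -
        have "G y \<le> G t" using that t by (intro G_mono) auto
        then show ?thesis using 1 by simp
      qed
      then show ?thesis
        by (simp add: mult_nonpos_nonneg)
    next
      case 2
      have "G y \<ge> 0" if "t \<le> y" "y \<le> 2" for y
      proof -
        have "G t \<le> G y" using that t by (intro G_mono) auto
        then show ?thesis using 2 by simp
      qed
      then show ?thesis
        by simp
    qed
  qed
  moreover have "\<Phi> 0 \<le> exp (2 * x\<^sup>2)"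
  proof -
    have "\<Phi> 0 = (1 - 2 * x\<^sup>2 / 2)\<^sup>2 + exp 2 * (2 * x\<^sup>2)\<^sup>2 / 4"
      unfolding \<Phi>_def a_def E_def by (simp add: algebra_simps power2_eq_square power4_eq_xxxx)
    also have "\<dots> \<le> exp (2 * x\<^sup>2)"
      by (rule axis_sensitivity_le_exp) simp
    finally show ?thesis .
  qed
  moreover have "\<Phi> 2 \<le> exp (2 * x\<^sup>2)"
  proof -
    have "\<Phi> 2 = ((1 - 2 * x / 2)\<^sup>2 + exp 2 * (2 * x)\<^sup>2 / 4)\<^sup>2 * exp (- k * 2)"
      unfolding \<Phi>_def a_def E_def
      by (simp add: algebra_simps power2_eq_square power4_eq_xxxx flip: exp_add)
    also have "\<dots> \<le> (exp (2 * x))\<^sup>2 * exp (- k * 2)"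
      using x by (intro mult_right_mono power_mono axis_sensitivity_le_exp) auto
    also have "\<dots> = exp (2 * x\<^sup>2)"
      unfolding k_def by (simp add: algebra_simps power2_eq_square flip: exp_add)
    finally show ?thesis .
  qed
  ultimately have "\<Phi> t \<le> exp (2 * x\<^sup>2)" by simp
  then have "\<Phi> t * exp (k * t) \<le> exp (2 * x\<^sup>2) * exp (k * t)"
    by (intro mult_right_mono) auto
  moreover have "\<Phi> t * exp (k * t)
      = (1 - x)\<^sup>2 * ((1 - (t - 1) * x)\<^sup>2 + exp 2 * t\<^sup>2 * x\<^sup>2 / 2) + exp (t + 2) * x ^ 4"
    unfolding \<Phi>_def a_def E_def
    by (simp add: algebra_simps power2_eq_square mult_exp_exp)
  moreover have "exp (2 * x\<^sup>2) * exp (k * t) = exp (2 * t * x + (2 - t) * x\<^sup>2)"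
    unfolding k_def by (simp add: algebra_simps power2_eq_square flip: exp_add)
  ultimately show ?thesis by simp
qed

text \<open>For \<open>x = (t a, t b)\<close> this is \<open>\<Sum>\<^sub>k \<ell>\<^sub>k(x)\<^sup>2 / \<lambda>(x\<^sub>k)\<close> for the design below, written in
  \<open>\<sigma> = a + b\<close> and \<open>\<pi> = a b\<close>; the three terms come from \<open>x\<^sub>0\<close>, from \<open>x\<^sub>1, x\<^sub>2\<close> and from \<open>x\<^sub>3\<close>.\<close>
definition lagrange_sq_sum :: "real \<Rightarrow> real \<Rightarrow> real \<Rightarrow> real" where
  "lagrange_sq_sum t \<sigma> \<pi> = (1 - t * \<sigma> / 2 + (t - 1) * \<pi>)\<^sup>2
     + exp 2 * t\<^sup>2 * (\<sigma>\<^sup>2 - 2 * \<pi> - 2 * \<pi> * \<sigma> + 2 * \<pi>\<^sup>2) / 4 + exp (t + 2) * \<pi>\<^sup>2"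

lemma convex_lagrange_sq_sum: "convex_on UNIV (\<lambda>p. lagrange_sq_sum t (fst p) (snd p))"
proof (rule convex_onI)
  fix \<theta> :: real and p q :: "real \<times> real"
  assume "0 < \<theta>" "\<theta> < 1"
  define ds dp where "ds = fst q - fst p" and "dp = snd q - snd p"
  have "(1 - \<theta>) * lagrange_sq_sum t (fst p) (snd p) + \<theta> * lagrange_sq_sum t (fst q) (snd q)
      - lagrange_sq_sum t (fst ((1 - \<theta>) *\<^sub>R p + \<theta> *\<^sub>R q)) (snd ((1 - \<theta>) *\<^sub>R p + \<theta> *\<^sub>R q))
      = \<theta> * (1 - \<theta>) * ((- t * ds / 2 + (t - 1) * dp)\<^sup>2
          + exp 2 * t\<^sup>2 * ((ds - dp)\<^sup>2 + dp\<^sup>2) / 4 + exp (t + 2) * dp\<^sup>2)"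
    unfolding lagrange_sq_sum_def ds_def dp_def power2_eq_square by (simp add: field_simps)
  also have "\<dots> \<ge> 0"
    using \<open>0 < \<theta>\<close> \<open>\<theta> < 1\<close> by (intro mult_nonneg_nonneg add_nonneg_nonneg) auto
  finally show "lagrange_sq_sum t (fst ((1 - \<theta>) *\<^sub>R p + \<theta> *\<^sub>R q)) (snd ((1 - \<theta>) *\<^sub>R p + \<theta> *\<^sub>R q))
      \<le> (1 - \<theta>) * lagrange_sq_sum t (fst p) (snd p) + \<theta> * lagrange_sq_sum t (fst q) (snd q)"
    by simp
qed simp

lemma lagrange_sq_sum_axis_le_exp:
  assumes "t * \<sigma> \<ge> 0"
  shows "lagrange_sq_sum t \<sigma> 0 \<le> exp (t * \<sigma>)"
proof -
  have "lagrange_sq_sum t \<sigma> 0 = (1 - t * \<sigma> / 2)\<^sup>2 + exp 2 * (t * \<sigma>)\<^sup>2 / 4"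
    unfolding lagrange_sq_sum_def by (simp add: power2_eq_square)
  also have "\<dots> \<le> exp (t * \<sigma>)"
    by (rule axis_sensitivity_le_exp[OF assms])
  finally show ?thesis .
qed

lemma lagrange_sq_sum_diagonal_le_exp:
  assumes "0 \<le> t" "t \<le> 2" "r \<ge> 0"
  shows "lagrange_sq_sum t (2 * r) (r\<^sup>2) \<le> exp (2 * t * r + (2 - t) * r\<^sup>2)"
proof -
  have "lagrange_sq_sum t (2 * r) (r\<^sup>2)
      = (1 - r)\<^sup>2 * ((1 - (t - 1) * r)\<^sup>2 + exp 2 * t\<^sup>2 * r\<^sup>2 / 2) + exp (t + 2) * r ^ 4"
    unfolding lagrange_sq_sum_def by (simp add: power2_eq_square power4_eq_xxxx field_simps)
  also have "\<dots> \<le> exp (2 * t * r + (2 - t) * r\<^sup>2)"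
    using assms by (intro diagonal_sensitivity_le_exp)
  finally show ?thesis .
qed

lemma diagonal_point_on_level_line:
  fixes t y :: real
  assumes t: "0 < t" "t \<le> 2" and y: "y \<ge> 0"
  obtains r where "r \<ge> 0" "2 * t * r + (2 - t) * r\<^sup>2 = y"
proof -
  define g where "g r = 2 * t * r + (2 - t) * r\<^sup>2" for r
  have "\<exists>r. 0 \<le> r \<and> r \<le> y / (2 * t) \<and> g r = y"
  proof (rule IVT)
    have "(2 - t) * (y / (2 * t))\<^sup>2 \<ge> 0" using t by simp
    then show "y \<le> g (y / (2 * t))" using t by (simp add: g_def)
    show "\<forall>x. 0 \<le> x \<and> x \<le> y / (2 * t) \<longrightarrow> isCont g x"
      unfolding g_def by (auto intro!: continuous_intros)
  qed (use y t in \<open>simp_all add: g_def\<close>)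
  then show thesis
    using that unfolding g_def by blast
qed

text \<open>The point lies between the two because \<open>a b \<le> r\<^sup>2\<close>, by AM-GM.\<close>
lemma level_line_between_axis_and_diagonal:
  fixes t a b :: real
  assumes t: "0 < t" "t \<le> 2" and ab: "a \<ge> 0" "b \<ge> 0"
  defines "y \<equiv> t * (a + b) + (2 - t) * (a * b)"
  obtains r \<theta> where "r \<ge> 0" "0 \<le> \<theta>" "\<theta> \<le> 1" "2 * t * r + (2 - t) * r\<^sup>2 = y"
    "(a + b, a * b) = (1 - \<theta>) *\<^sub>R (y / t, 0) + \<theta> *\<^sub>R (2 * r, r\<^sup>2)"
proof -
  have "y \<ge> 0" unfolding y_def using t ab by simp
  then obtain r where r: "0 \<le> r" "2 * t * r + (2 - t) * r\<^sup>2 = y"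
    using diagonal_point_on_level_line[OF t] by blast
  have "a * b \<le> r\<^sup>2"
  proof (rule ccontr)
    assume "\<not> a * b \<le> r\<^sup>2"
    then have "r\<^sup>2 < a * b" by simp
    also have "\<dots> \<le> ((a + b) / 2)\<^sup>2"
      using sum_squares_bound[of a b] by (simp add: power2_eq_square field_simps)
    finally have "r < (a + b) / 2"
      by (rule power_less_imp_less_base) (use ab in simp)
    then have "t * (2 * r) < t * (a + b)"
      using t by simp
    moreover have "(2 - t) * r\<^sup>2 \<le> (2 - t) * (a * b)"
      using \<open>r\<^sup>2 < a * b\<close> t by (intro mult_left_mono) auto
    ultimately have "2 * t * r + (2 - t) * r\<^sup>2 < y"
      unfolding y_def by simp
    then show False using r by simp
  qed
  define \<theta> where "\<theta> = (if r = 0 then 0 else a * b / r\<^sup>2)"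
  have \<theta>: "0 \<le> \<theta>" "\<theta> \<le> 1"
    using \<open>a * b \<le> r\<^sup>2\<close> ab by (auto simp: \<theta>_def divide_le_eq_1)
  have \<pi>: "a * b = \<theta> * r\<^sup>2"
  proof (cases "r = 0")
    case True
    then show ?thesis
      using \<open>a * b \<le> r\<^sup>2\<close> mult_nonneg_nonneg[OF ab] by (simp add: \<theta>_def)
  qed (simp add: \<theta>_def)
  have "t * ((1 - \<theta>) * (y / t) + \<theta> * (2 * r)) = (1 - \<theta>) * y + \<theta> * (2 * t * r)"
    using t by (simp add: field_simps)
  also have "\<dots> = y - (2 - t) * (\<theta> * r\<^sup>2)"
  proof -
    have tr: "2 * t * r = y - (2 - t) * r\<^sup>2" using r(2) by linarith
    show ?thesis by (subst tr) (simp add: algebra_simps)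
  qed
  also have "\<dots> = t * (a + b)"
    unfolding y_def \<pi> by simp
  finally have "t * (a + b) = t * ((1 - \<theta>) * (y / t) + \<theta> * (2 * r))" ..
  then have "a + b = (1 - \<theta>) * (y / t) + \<theta> * (2 * r)"
    using t by simp
  then show thesis
    using that[OF r(1) \<theta>] r \<pi> by simp
qed

lemma lagrange_sq_sum_le_exp:
  assumes t: "0 < t" "t \<le> 2" and ab: "a \<ge> 0" "b \<ge> 0"
  shows "lagrange_sq_sum t (a + b) (a * b) \<le> exp (t * (a + b) + (2 - t) * (a * b))"
proof -
  define y where "y = t * (a + b) + (2 - t) * (a * b)"
  have y: "y \<ge> 0" unfolding y_def using t ab by simp
  obtain r \<theta> where r: "r \<ge> 0" "2 * t * r + (2 - t) * r\<^sup>2 = y" and \<theta>: "0 \<le> \<theta>" "\<theta> \<le> 1"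
    and mix: "(a + b, a * b) = (1 - \<theta>) *\<^sub>R (y / t, 0) + \<theta> *\<^sub>R (2 * r, r\<^sup>2)"
    using level_line_between_axis_and_diagonal[OF t ab] unfolding y_def by blast
  have "lagrange_sq_sum t (fst ((1 - \<theta>) *\<^sub>R (y / t, 0) + \<theta> *\<^sub>R (2 * r, r\<^sup>2)))
        (snd ((1 - \<theta>) *\<^sub>R (y / t, 0) + \<theta> *\<^sub>R (2 * r, r\<^sup>2)))
      \<le> (1 - \<theta>) * lagrange_sq_sum t (y / t) 0 + \<theta> * lagrange_sq_sum t (2 * r) (r\<^sup>2)"
    using convex_onD[OF convex_lagrange_sq_sum, of \<theta> "(y / t, 0)" "(2 * r, r\<^sup>2)"] \<theta> by simp
  then have "lagrange_sq_sum t (a + b) (a * b)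
      \<le> (1 - \<theta>) * lagrange_sq_sum t (y / t) 0 + \<theta> * lagrange_sq_sum t (2 * r) (r\<^sup>2)"
    unfolding mix[symmetric] by simp
  also have "\<dots> \<le> (1 - \<theta>) * exp y + \<theta> * exp y"
    using lagrange_sq_sum_axis_le_exp[of t "y / t"] lagrange_sq_sum_diagonal_le_exp[of t r] t y r \<theta>
    by (intro add_mono mult_left_mono) auto
  finally show ?thesis
    unfolding y_def by (simp add: algebra_simps)
qed

section \<open>The Poisson model with interaction\<close>

lemma vector_4 [simp]:
  "(vector [a, b, c, d] :: ('a::zero)^4) $ 1 = a"
  "(vector [a, b, c, d] :: ('a::zero)^4) $ 2 = b"
  "(vector [a, b, c, d] :: ('a::zero)^4) $ 3 = c"
  "(vector [a, b, c, d] :: ('a::zero)^4) $ 4 = d"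
  unfolding vector_def by simp_all

lemma exhaust_4_from_0: "(k::4) = 0 \<or> k = 1 \<or> k = 2 \<or> k = 3"
  using exhaust_4[of k] by auto

lemma UNIV_4_from_0: "(UNIV :: 4 set) = {0, 1, 2, 3}"
  using exhaust_4_from_0 by auto

lemma sum_4_from_0: "sum f (UNIV :: 4 set) = f 0 + f 1 + f 2 + f 3"
  unfolding UNIV_4_from_0 by (simp add: ac_simps)

definition design_point :: "real \<Rightarrow> 4 \<Rightarrow> real \<times> real" where
  "design_point t k = (if k = 0 then (0, 0) else if k = 1 then (2, 0) else if k = 2 then (0, 2) else (t, t))"

definition lagrange_fun :: "real \<Rightarrow> 4 \<Rightarrow> real \<times> real \<Rightarrow> real" where
  "lagrange_fun t k x =
     (if k = 0 then 1 - (fst x + snd x) / 2 + (t - 1) * fst x * snd x / t\<^sup>2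
      else if k = 1 then fst x / 2 - fst x * snd x / (2 * t)
      else if k = 2 then snd x / 2 - fst x * snd x / (2 * t)
      else fst x * snd x / t\<^sup>2)"

lemma design_point_simps [simp]:
  "design_point t 0 = (0, 0)" "design_point t 1 = (2, 0)"
  "design_point t 2 = (0, 2)" "design_point t 3 = (t, t)"
  by (simp_all add: design_point_def)

lemma lagrange_fun_simps [simp]:
  "lagrange_fun t 0 x = 1 - (fst x + snd x) / 2 + (t - 1) * fst x * snd x / t\<^sup>2"
  "lagrange_fun t 1 x = fst x / 2 - fst x * snd x / (2 * t)"
  "lagrange_fun t 2 x = snd x / 2 - fst x * snd x / (2 * t)"
  "lagrange_fun t 3 x = fst x * snd x / t\<^sup>2"
  by (simp_all add: lagrange_fun_def)

lemma regf_nth [simp]: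
  "regf x $ 1 = 1" "regf x $ 2 = fst x" "regf x $ 3 = snd x" "regf x $ 4 = fst x * snd x"
  by (simp_all add: regf_def)

lemma regf_eq_lagrange_expansion:
  assumes "t \<noteq> 0"
  shows "regf x = (\<Sum>k\<in>UNIV. lagrange_fun t k x *\<^sub>R regf (design_point t k))"
  using assms
  by (simp add: vec_eq_iff forall_4 sum_4_from_0 field_simps power2_eq_square)

lemma lagrange_fun_design_point:
  assumes "t \<noteq> 0"
  shows "lagrange_fun t k (design_point t m) = (if k = m then 1 else 0)"
  using exhaust_4_from_0[of k] exhaust_4_from_0[of m] assms
  by (elim disjE) (simp_all add: field_simps power2_eq_square)

lemma intensity_pos: "intensity \<beta> x > 0"
  by (simp add: intensity_def)

lemma intensity_eq:
  "intensity (vector [0, -1, -1, -\<rho>]) x = exp (- fst x - snd x - \<rho> * (fst x * snd x))"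
  unfolding intensity_def inner_vec_def by (simp add: sum_4 algebra_simps)

lemma design_parameter_root:
  fixes \<rho> t :: real
  assumes "\<rho> \<ge> 0"
    and "t = (if \<rho> > 0 then (sqrt (1 + 8 * \<rho>) - 1) / (2 * \<rho>) else 2)"
  shows "0 < t" "t \<le> 2" "\<rho> * t\<^sup>2 = 2 - t"
proof -
  have "0 < t \<and> \<rho> * t\<^sup>2 = 2 - t"
  proof (cases "\<rho> > 0")
    case True
    define s where "s = sqrt (1 + 8 * \<rho>)"
    have s: "s > 1" "s\<^sup>2 = 1 + 8 * \<rho>"
      unfolding s_def using True by (simp_all add: real_less_rsqrt)
    have t_eq: "t = (s - 1) / (2 * \<rho>)"
      using assms True unfolding s_def by simp
    have "\<rho> * t\<^sup>2 + t = (s\<^sup>2 - 1) / (4 * \<rho>)"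
      unfolding t_eq using True by (simp add: field_simps power2_eq_square)
    then have "\<rho> * t\<^sup>2 = 2 - t"
      using True s(2) by simp
    moreover have "0 < t"
      unfolding t_eq using True s(1) by simp
    ultimately show ?thesis by simp
  qed (use assms in simp)
  moreover have "\<rho> * t\<^sup>2 \<ge> 0"
    using assms(1) by simp
  ultimately show "0 < t" "t \<le> 2" "\<rho> * t\<^sup>2 = 2 - t"
    by auto
qed

lemma design_sensitivity_le_one:
  assumes t: "0 < t" "t \<le> 2" "\<rho> * t\<^sup>2 = 2 - t" and x: "fst x \<ge> 0" "snd x \<ge> 0"
  defines "\<beta> \<equiv> vector [0, -1, -1, -\<rho>]"
  shows "intensity \<beta> x * (\<Sum>k\<in>UNIV. (lagrange_fun t k x)\<^sup>2 / intensity \<beta> (design_point t k)) \<le> 1"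
proof -
  define a b where "a = fst x / t" and "b = snd x / t"
  have ab: "a \<ge> 0" "b \<ge> 0" and x_eq: "fst x = t * a" "snd x = t * b"
    using t x by (simp_all add: a_def b_def)
  define z where "z = t * (a + b) + (2 - t) * (a * b)"
  have "intensity \<beta> (design_point t 3) = exp (- (t + 2))"
    using t(3) by (simp add: \<beta>_def intensity_eq power2_eq_square)
  then have "(\<Sum>k\<in>UNIV. (lagrange_fun t k x)\<^sup>2 / intensity \<beta> (design_point t k))
      = lagrange_sq_sum t (a + b) (a * b)"
    using t unfolding lagrange_sq_sum_def
    by (simp add: sum_4_from_0 \<beta>_def intensity_eq exp_minus x_eq mult_exp_exp field_simps
        power2_eq_square)
  moreover have "intensity \<beta> x = exp (- z)"
    unfolding \<beta>_def intensity_eq x_eq z_def using t(3)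
    by (simp add: algebra_simps power2_eq_square flip: t(3))
  moreover have "exp (- z) * lagrange_sq_sum t (a + b) (a * b) \<le> exp (- z) * exp z"
    using lagrange_sq_sum_le_exp[OF t(1,2) ab] unfolding z_def by (intro mult_left_mono) auto
  ultimately show ?thesis
    by (simp flip: exp_add)
qed

theorem theorem2:
  fixes \<rho> t :: real
  assumes "\<rho> \<ge> 0"
    and "t = (if \<rho> > 0 then (sqrt (1 + 8 * \<rho>) - 1) / (2 * \<rho>) else 2)"
  shows "locally_D_optimal (vector [0, -1, -1, -\<rho>])
           {x :: real \<times> real. fst x \<ge> 0 \<and> snd x \<ge> 0}
           {(0, 0), (2, 0), (0, 2), (t, t)} (\<lambda>_. 1 / 4)"
proof -
  note t = design_parameter_root[OF assms]
  let ?\<beta> = "vector [0, -1, -1, -\<rho>] :: real^4"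
  let ?X = "{x :: real \<times> real. fst x \<ge> 0 \<and> snd x \<ge> 0}"
  have support: "{(0, 0), (2, 0), (0, 2), (t, t)} = range (design_point t)"
    by (simp add: UNIV_4_from_0)
  have "inj (design_point t)"
    using lagrange_fun_design_point[of t] t(1) by (metis injI less_irrefl zero_neq_one)
  then have "card (range (design_point t)) = 4"
    by (simp add: card_image)
  then have design: "is_design ?X (range (design_point t)) (\<lambda>_. 1 / 4)"
    using t by (auto simp: is_design_def UNIV_4_from_0)
  have "det (info_matrix ?\<beta> S w) \<le> det (info_matrix ?\<beta> (range (design_point t)) (\<lambda>_. 1 / 4))"
    if "is_design ?X S w" for S w
    using that t
    by (auto simp: info_matrix_def is_design_def subset_eq
        intro!: uniform_saturated_design_D_optimal[where l = "lagrange_fun t", simplified]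
        intensity_pos less_imp_le[OF intensity_pos] regf_eq_lagrange_expansion lagrange_fun_design_point
        design_sensitivity_le_one)
  then show ?thesis
    using design unfolding locally_D_optimal_def support by blast
qed

end
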